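(* If $T$ is a tree of maximum degree at most $3$, then $\gamma_e(T)\geq\frac{1}{6}(n(T)+2)$.
   Context: All graphs are finite, simple and undirected; $n(G)=|V(G)|$. For a graph $G$, a set $S\subseteq V(G)$, and vertices $u,v$ with $u\in S$ or $v\in S$, ${\rm dist}_{(G,S)}(u,v)$ is the minimum number of edges of a path $P$ in $G$ between $u$ and $v$ such that $S$ contains exactly one endvertex of $P$ and no internal vertex of $P$, and $\infty$ if no such path exists (so ${\rm dist}_{(G,S)}(u,u)=0$ for $u\in S$). For $u\in V(G)$, $w_{(G,S)}(u)=\sum_{v\in S}(1/2)^{{\rm dist}_{(G,S)}(u,v)-1}$ with $(1/2)^{\infty}=0$. $S$ is an exponential dominating set of $G$ if $w_{(G,S)}(u)\geq 1$ for every $u\in V(G)$, and $\gamma_e(G)$ is the minimum cardinality of an exponential dominating set of $G$. *)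

theory Defs
  imports Complex_Main
begin

definition simple_graph :: "'a set \<Rightarrow> ('a \<Rightarrow> 'a \<Rightarrow> bool) \<Rightarrow> bool" where
  "simple_graph V E \<longleftrightarrow> finite V \<and> (\<forall>x y. E x y \<longrightarrow> x \<in> V \<and> y \<in> V)
     \<and> (\<forall>x y. E x y \<longrightarrow> E y x) \<and> (\<forall>x. \<not> E x x)"

definition gpath :: "'a set \<Rightarrow> ('a \<Rightarrow> 'a \<Rightarrow> bool) \<Rightarrow> 'a list \<Rightarrow> bool" where
  "gpath V E xs \<longleftrightarrow> xs \<noteq> [] \<and> distinct xs \<and> set xs \<subseteq> V \<and> successively E xs"

definition connected_graph :: "'a set \<Rightarrow> ('a \<Rightarrow> 'a \<Rightarrow> bool) \<Rightarrow> bool" where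
  "connected_graph V E \<longleftrightarrow> V \<noteq> {} \<and>
     (\<forall>u\<in>V. \<forall>v\<in>V. \<exists>xs. gpath V E xs \<and> hd xs = u \<and> last xs = v)"

definition has_cycle :: "'a set \<Rightarrow> ('a \<Rightarrow> 'a \<Rightarrow> bool) \<Rightarrow> bool" where
  "has_cycle V E \<longleftrightarrow> (\<exists>xs. gpath V E xs \<and> length xs \<ge> 3 \<and> E (last xs) (hd xs))"

definition tree :: "'a set \<Rightarrow> ('a \<Rightarrow> 'a \<Rightarrow> bool) \<Rightarrow> bool" where
  "tree V E \<longleftrightarrow> simple_graph V E \<and> connected_graph V E \<and> \<not> has_cycle V E"

definition degree :: "'a set \<Rightarrow> ('a \<Rightarrow> 'a \<Rightarrow> bool) \<Rightarrow> 'a \<Rightarrow> nat" where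
  "degree V E v = card {u \<in> V. E v u}"

text \<open>Paths between u and v (of length |xs|-1) such that S contains exactly one endvertex and
  no internal vertex.  For xs = [u] with u in S this gives distance 0.\<close>
definition S_path :: "'a set \<Rightarrow> ('a \<Rightarrow> 'a \<Rightarrow> bool) \<Rightarrow> 'a set \<Rightarrow> 'a \<Rightarrow> 'a \<Rightarrow> 'a list \<Rightarrow> bool" where
  "S_path V E S u v xs \<longleftrightarrow> gpath V E xs \<and> hd xs = u \<and> last xs = v
     \<and> card ({hd xs, last xs} \<inter> S) = 1 \<and> set (butlast (tl xs)) \<inter> S = {}"

text \<open>dist_(G,S)(u,v); None represents infinity.\<close>
definition S_dist :: "'a set \<Rightarrow> ('a \<Rightarrow> 'a \<Rightarrow> bool) \<Rightarrow> 'a set \<Rightarrow> 'a \<Rightarrow> 'a \<Rightarrow> nat option" where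
  "S_dist V E S u v = (if \<exists>xs. S_path V E S u v xs
      then Some (LEAST n. \<exists>xs. S_path V E S u v xs \<and> length xs = Suc n) else None)"

definition exp_weight :: "'a set \<Rightarrow> ('a \<Rightarrow> 'a \<Rightarrow> bool) \<Rightarrow> 'a set \<Rightarrow> 'a \<Rightarrow> real" where
  "exp_weight V E S u = (\<Sum>v\<in>S. case S_dist V E S u v of
       None \<Rightarrow> 0 | Some d \<Rightarrow> (1/2::real) powi (int d - 1))"

definition exp_dominating :: "'a set \<Rightarrow> ('a \<Rightarrow> 'a \<Rightarrow> bool) \<Rightarrow> 'a set \<Rightarrow> bool" where
  "exp_dominating V E S \<longleftrightarrow> S \<subseteq> V \<and> (\<forall>u\<in>V. exp_weight V E S u \<ge> 1)"

definition gamma_e :: "'a set \<Rightarrow> ('a \<Rightarrow> 'a \<Rightarrow> bool) \<Rightarrow> nat" where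
  "gamma_e V E = (LEAST k. \<exists>S. exp_dominating V E S \<and> card S = k)"

end

theory Submission
  imports Defs
begin

text \<open>For an edge uy let the exit flow f(u,y) be the total
  weight of the paths that start with uy and end at their first vertex in S, a path with d edges
  weighing (1/2)^(d-1). A vertex y outside S has exponential weight at most its outflow
  out(y) = \<Sum>z. f(y,z), so out(y) \<ge> 1; its inflow in(y) = \<Sum>u. f(u,y) satisfies
  2 in(y) \<le> (deg y - 1) out(y), because each path entering y continues along one of the other
  edges with half the weight. A vertex of S has in(y) \<le> deg y. Since the charges out - in sum
  to zero, summing over all vertices gives (\<Sum>y\<notin>S. 3 - deg y) \<le> 2 (\<Sum>y\<in>S. deg y), and with
  \<Sum> deg = 2n - 2 and deg \<le> 3 this is n + 2 \<le> 6 |S|.\<close>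

lemma finite_gpaths:
  assumes "finite V"
  shows "finite {xs. gpath V E xs}"
proof -
  have "{xs. gpath V E xs} \<subseteq> {xs. set xs \<subseteq> V \<and> length xs \<le> card V}"
  proof
    fix xs assume "xs \<in> {xs. gpath V E xs}"
    then have "distinct xs" "set xs \<subseteq> V" by (auto simp: gpath_def)
    moreover from this have "length xs \<le> card V"
      using card_mono[OF assms] distinct_card by metis
    ultimately show "xs \<in> {xs. set xs \<subseteq> V \<and> length xs \<le> card V}" by simp
  qed
  then show ?thesis
    using finite_lists_length_le[OF assms] finite_subset by blast
qed

lemma gpath_mono: "gpath V' E xs \<Longrightarrow> V' \<subseteq> V \<Longrightarrow> gpath V E xs"
  by (auto simp: gpath_def)

lemma has_cycle_mono: "has_cycle V' E \<Longrightarrow> V' \<subseteq> V \<Longrightarrow> has_cycle V E"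
  unfolding has_cycle_def using gpath_mono by blast

lemma successively_drop: "successively P xs \<Longrightarrow> successively P (drop i xs)"
  by (induction xs arbitrary: i) (auto simp: successively_Cons drop_Cons' split: nat.splits)

lemma longest_gpath_exists:
  assumes "finite V" and "V \<noteq> {}"
  obtains xs where "gpath V E xs" and "\<And>ys. gpath V E ys \<Longrightarrow> length ys \<le> length xs"
proof -
  let ?P = "{xs. gpath V E xs}"
  obtain a where "a \<in> V" using assms(2) by blast
  then have "[a] \<in> ?P" by (simp add: gpath_def)
  moreover have "finite (length ` ?P)" using finite_gpaths[OF assms(1)] by simp
  ultimately have "Max (length ` ?P) \<in> length ` ?P" by (intro Max_in) auto
  then obtain xs where "gpath V E xs" "length xs = Max (length ` ?P)" by auto
  with \<open>finite (length ` ?P)\<close> show ?thesis by (intro that) auto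
qed

lemma has_cycle_if_edge_from_last:
  assumes "gpath V E xs" and "i + 3 \<le> length xs" and "E (last xs) (xs ! i)"
  shows "has_cycle V E"
proof -
  have "gpath V E (drop i xs)"
    using assms(1,2) by (auto simp: gpath_def successively_drop dest: in_set_dropD)
  moreover have "E (last (drop i xs)) (hd (drop i xs))"
    using assms(2,3) by (simp add: hd_drop_conv_nth)
  ultimately show ?thesis
    using assms(2) unfolding has_cycle_def by (intro exI[of _ "drop i xs"]) auto
qed

text \<open>The last vertex of a longest path is a leaf: a second neighbour would either extend the
  path or close a cycle.\<close>

lemma acyclic_graph_has_leaf:
  assumes "finite V" and "V \<noteq> {}" and "\<forall>x. \<not> E x x" and "\<not> has_cycle V E"
  obtains v where "v \<in> V" and "degree V E v \<le> 1"
proof -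
  obtain xs where xs: "gpath V E xs" and longest: "\<And>ys. gpath V E ys \<Longrightarrow> length ys \<le> length xs"
    using longest_gpath_exists[OF assms(1,2)] by blast
  define x where "x = last xs"
  define p where "p = (if length xs \<ge> 2 then xs ! (length xs - 2) else x)"
  have "x \<in> V" using xs unfolding x_def gpath_def by auto
  moreover have "{u\<in>V. E x u} \<subseteq> {p}"
  proof
    fix w assume "w \<in> {u\<in>V. E x u}"
    then have wV: "w \<in> V" and xw: "E x w" by auto
    show "w \<in> {p}"
    proof (cases "w \<in> set xs")
      case False
      then have "gpath V E (xs @ [w])"
        using xs wV xw unfolding gpath_def x_def by (auto simp: successively_append_iff)
      with longest show ?thesis by fastforce
    next
      case True
      then obtain i where i: "i < length xs" "xs ! i = w" by (auto simp: in_set_conv_nth)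
      have "xs \<noteq> []" using xs by (simp add: gpath_def)
      then have "xs ! (length xs - 1) = x" by (simp add: x_def last_conv_nth)
      then have "i \<noteq> length xs - 1" using i assms(3) xw by auto
      show ?thesis
      proof (rule ccontr)
        assume "w \<notin> {p}"
        then have "length xs \<ge> 2 \<Longrightarrow> i \<noteq> length xs - 2" using i by (auto simp: p_def)
        with i \<open>i \<noteq> length xs - 1\<close> have "i + 3 \<le> length xs"
          by (cases "length xs \<ge> 2") auto
        with xs xw i have "has_cycle V E"
          by (intro has_cycle_if_edge_from_last[of V E xs i]) (auto simp: x_def)
        with assms(4) show False ..
      qed
    qed
  qed
  then have "degree V E x \<le> 1"
    unfolding degree_def using card_mono[of "{p}" "{u\<in>V. E x u}"] by simp
  ultimately show ?thesis by (rule that)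
qed

lemma degree_delete_vertex:
  assumes "finite V"
  shows "degree V E x = degree (V - {v}) E x + (if v \<in> V \<and> E x v then 1 else 0)"
proof -
  have "{u\<in>V. E x u} = {u\<in>V - {v}. E x u} \<union> (if v \<in> V \<and> E x v then {v} else {})"
    by auto
  then show ?thesis
    unfolding degree_def using assms by (auto simp: card_insert_if)
qed

lemma sum_degree_delete_vertex:
  assumes "finite V" and "v \<in> V" and "\<forall>x y. E x y \<longrightarrow> E y x" and "\<forall>x. \<not> E x x"
  shows "(\<Sum>x\<in>V. degree V E x) = (\<Sum>x\<in>V - {v}. degree (V - {v}) E x) + 2 * degree V E v"
proof -
  have "(\<Sum>x\<in>V - {v}. if E x v then 1 else 0) = card {x\<in>V - {v}. E x v}"
    using assms(1) by (simp add: sum.If_cases Int_def)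
  also have "{x\<in>V - {v}. E x v} = {u\<in>V. E v u}"
    using assms(3,4) by auto
  finally have "(\<Sum>x\<in>V - {v}. if E x v then 1 else 0) = degree V E v"
    by (simp add: degree_def)
  moreover have "(\<Sum>x\<in>V - {v}. degree V E x)
      = (\<Sum>x\<in>V - {v}. degree (V - {v}) E x) + (\<Sum>x\<in>V - {v}. if E x v then 1 else 0)"
    using degree_delete_vertex[OF assms(1), of E _ v] assms(2) by (simp add: sum.distrib)
  ultimately have "(\<Sum>x\<in>V - {v}. degree V E x)
      = (\<Sum>x\<in>V - {v}. degree (V - {v}) E x) + degree V E v"
    by simp
  moreover have "(\<Sum>x\<in>V. degree V E x) = degree V E v + (\<Sum>x\<in>V - {v}. degree V E x)"
    using assms(1,2) by (simp add: sum.remove)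
  ultimately show ?thesis by simp
qed

lemma sum_degree_acyclic:
  assumes "finite V" and "V \<noteq> {}" and "\<forall>x y. E x y \<longrightarrow> E y x" and "\<forall>x. \<not> E x x"
    and "\<not> has_cycle V E"
  shows "(\<Sum>x\<in>V. degree V E x) + 2 \<le> 2 * card V"
  using assms(1,2,5)
proof (induction "card V" arbitrary: V)
  case 0
  then show ?case by simp
next
  case (Suc n V)
  obtain v where v: "v \<in> V" "degree V E v \<le> 1"
    using acyclic_graph_has_leaf[of V E] Suc.prems assms(4) by blast
  show ?case
  proof (cases "V = {v}")
    case True
    then show ?thesis using assms(4) by (simp add: degree_def)
  next
    case False
    have "\<not> has_cycle (V - {v}) E" using Suc.prems(3) has_cycle_mono by blast
    then have "(\<Sum>x\<in>V - {v}. degree (V - {v}) E x) + 2 \<le> 2 * card (V - {v})"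
      using Suc False v by (intro Suc.hyps) auto
    then show ?thesis
      using sum_degree_delete_vertex[OF Suc.prems(1) v(1) assms(3,4)] v Suc.prems(1)
      by (simp add: card_Diff_singleton)
  qed
qed

definition neighbours :: "'a set \<Rightarrow> ('a \<Rightarrow> 'a \<Rightarrow> bool) \<Rightarrow> 'a \<Rightarrow> 'a set" where
  "neighbours V E y = {z\<in>V. E y z}"

lemma card_neighbours: "card (neighbours V E y) = degree V E y"
  by (simp add: neighbours_def degree_def)

lemma finite_neighbours: "finite V \<Longrightarrow> finite (neighbours V E y)"
  by (simp add: neighbours_def)

definition exit_paths :: "'a set \<Rightarrow> ('a \<Rightarrow> 'a \<Rightarrow> bool) \<Rightarrow> 'a set \<Rightarrow> 'a \<Rightarrow> 'a \<Rightarrow> 'a list set" where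
  "exit_paths V E S u y = {xs. gpath V E xs \<and> 2 \<le> length xs \<and> hd xs = u \<and> xs ! 1 = y
     \<and> last xs \<in> S \<and> set (butlast (tl xs)) \<inter> S = {}}"

text \<open>A path with d edges contributes (1/2)^(d-1), as in the exponential weight.\<close>

definition path_weight :: "'a list \<Rightarrow> real" where
  "path_weight xs = (1/2) ^ (length xs - 2)"

definition exit_flow :: "'a set \<Rightarrow> ('a \<Rightarrow> 'a \<Rightarrow> bool) \<Rightarrow> 'a set \<Rightarrow> 'a \<Rightarrow> 'a \<Rightarrow> real" where
  "exit_flow V E S u y = (\<Sum>xs\<in>exit_paths V E S u y. path_weight xs)"

definition outflow :: "'a set \<Rightarrow> ('a \<Rightarrow> 'a \<Rightarrow> bool) \<Rightarrow> 'a set \<Rightarrow> 'a \<Rightarrow> real" where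
  "outflow V E S y = (\<Sum>z\<in>neighbours V E y. exit_flow V E S y z)"

definition inflow :: "'a set \<Rightarrow> ('a \<Rightarrow> 'a \<Rightarrow> bool) \<Rightarrow> 'a set \<Rightarrow> 'a \<Rightarrow> real" where
  "inflow V E S y = (\<Sum>u\<in>neighbours V E y. exit_flow V E S u y)"

lemma finite_exit_paths: "finite V \<Longrightarrow> finite (exit_paths V E S u y)"
  by (rule finite_subset[OF _ finite_gpaths[of V E]]) (auto simp: exit_paths_def)

lemma path_weight_nonneg: "path_weight xs \<ge> 0"
  by (simp add: path_weight_def)

lemma exit_flow_nonneg: "exit_flow V E S u y \<ge> 0"
  unfolding exit_flow_def by (intro sum_nonneg path_weight_nonneg)

lemma outflow_nonneg: "outflow V E S y \<ge> 0"
  unfolding outflow_def by (intro sum_nonneg exit_flow_nonneg)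

lemma exit_paths_Cons_Cons:
  assumes "xs \<in> exit_paths V E S u y"
  obtains ys where "xs = u # y # ys"
proof -
  from assms have "2 \<le> length xs" "hd xs = u" "xs ! 1 = y" by (auto simp: exit_paths_def)
  then show ?thesis
    by (cases xs rule: remdups_adj.cases) (auto intro: that)
qed

lemma sum_exit_flow:
  assumes "finite V" and "finite Z"
  shows "(\<Sum>z\<in>Z. exit_flow V E S u z) = (\<Sum>xs\<in>(\<Union>z\<in>Z. exit_paths V E S u z). path_weight xs)"
  unfolding exit_flow_def
  by (rule sum.UNION_disjoint[symmetric]) (use assms finite_exit_paths in \<open>auto simp: exit_paths_def\<close>)

lemma exit_flow_le_1:
  assumes "y \<in> S"
  shows "exit_flow V E S u y \<le> 1"
proof -
  have "exit_paths V E S u y \<subseteq> {[u, y]}"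
  proof
    fix xs assume xs: "xs \<in> exit_paths V E S u y"
    then obtain ys where xs_eq: "xs = u # y # ys" by (rule exit_paths_Cons_Cons)
    have "ys = []"
    proof (rule ccontr)
      assume "ys \<noteq> []"
      then have "y \<in> set (butlast (tl xs))" using xs_eq by simp
      with xs assms show False by (auto simp: exit_paths_def)
    qed
    with xs_eq show "xs \<in> {[u, y]}" by simp
  qed
  then have "exit_flow V E S u y \<le> (\<Sum>xs\<in>{[u, y]}. path_weight xs)"
    unfolding exit_flow_def by (intro sum_mono2) (auto simp: path_weight_nonneg)
  also have "\<dots> = 1" by (simp add: path_weight_def)
  finally show ?thesis .
qed

lemma tl_exit_path:
  assumes xs: "xs \<in> exit_paths V E S u y" and "y \<notin> S"
  shows "tl xs \<in> (\<Union>z\<in>neighbours V E y - {u}. exit_paths V E S y z)"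
    and "path_weight xs = (1/2) * path_weight (tl xs)"
proof -
  obtain ys where xs_eq: "xs = u # y # ys" using xs by (rule exit_paths_Cons_Cons)
  have gp: "gpath V E xs" and last_S: "last xs \<in> S" and avoid: "set (butlast (tl xs)) \<inter> S = {}"
    using xs by (auto simp: exit_paths_def)
  obtain z zs where ys_eq: "ys = z # zs"
    using last_S \<open>y \<notin> S\<close> xs_eq by (cases ys) auto
  have "gpath V E (y # z # zs)" "last (y # z # zs) \<in> S" "set (butlast (z # zs)) \<inter> S = {}"
    using gp last_S avoid unfolding xs_eq ys_eq gpath_def by (auto split: if_splits)
  then have "tl xs \<in> exit_paths V E S y z"
    unfolding xs_eq ys_eq exit_paths_def by simp
  moreover have "z \<in> neighbours V E y - {u}"
    using gp unfolding xs_eq ys_eq gpath_def neighbours_def by auto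
  ultimately show "tl xs \<in> (\<Union>z\<in>neighbours V E y - {u}. exit_paths V E S y z)" by blast
  show "path_weight xs = (1/2) * path_weight (tl xs)"
    unfolding xs_eq ys_eq path_weight_def by simp
qed

lemma exit_flow_le_half_sum:
  assumes "finite V" and "y \<notin> S"
  shows "exit_flow V E S u y \<le> (1/2) * (\<Sum>z\<in>neighbours V E y - {u}. exit_flow V E S y z)"
proof -
  let ?P = "exit_paths V E S u y"
  let ?U = "\<Union>z\<in>neighbours V E y - {u}. exit_paths V E S y z"
  have "inj_on tl ?P"
    by (rule inj_onI) (metis exit_paths_Cons_Cons list.sel(3))
  have "exit_flow V E S u y = (\<Sum>xs\<in>?P. (1/2) * path_weight (tl xs))"
    unfolding exit_flow_def by (rule sum.cong[OF refl]) (rule tl_exit_path(2)[OF _ assms(2)])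
  also have "\<dots> = (1/2) * (\<Sum>xs\<in>tl ` ?P. path_weight xs)"
    by (simp add: sum_distrib_left sum.reindex[OF \<open>inj_on tl ?P\<close>])
  also have "(\<Sum>xs\<in>tl ` ?P. path_weight xs) \<le> (\<Sum>xs\<in>?U. path_weight xs)"
    using tl_exit_path(1)[OF _ assms(2)] finite_exit_paths[OF assms(1)] finite_neighbours[OF assms(1)]
    by (intro sum_mono2) (auto simp: path_weight_nonneg)
  also have "\<dots> = (\<Sum>z\<in>neighbours V E y - {u}. exit_flow V E S y z)"
    using assms(1) by (simp add: sum_exit_flow finite_neighbours)
  finally show ?thesis by simp
qed

lemma inflow_le_degree: "y \<in> S \<Longrightarrow> inflow V E S y \<le> degree V E y"
  unfolding inflow_def card_neighbours[symmetric]
  using sum_mono[of "neighbours V E y" "\<lambda>u. exit_flow V E S u y" "\<lambda>_. 1"] exit_flow_le_1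
  by fastforce

lemma inflow_le_outflow:
  assumes "finite V" and "y \<notin> S"
  shows "2 * inflow V E S y \<le> (real (degree V E y) - 1) * outflow V E S y"
proof -
  have "inflow V E S y \<le> (\<Sum>u\<in>neighbours V E y. (1/2) * (outflow V E S y - exit_flow V E S y u))"
    unfolding inflow_def
  proof (rule sum_mono)
    fix u assume "u \<in> neighbours V E y"
    then show "exit_flow V E S u y \<le> (1/2) * (outflow V E S y - exit_flow V E S y u)"
      using exit_flow_le_half_sum[OF assms, where u=u and E=E] finite_neighbours[OF assms(1), of E y]
      by (simp add: outflow_def sum_diff1)
  qed
  also have "\<dots> = (1/2) * (\<Sum>u\<in>neighbours V E y. outflow V E S y - exit_flow V E S y u)"
    by (rule sum_distrib_left[symmetric])
  also have "(\<Sum>u\<in>neighbours V E y. outflow V E S y - exit_flow V E S y u)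
      = degree V E y * outflow V E S y - outflow V E S y"
    by (simp add: sum_subtractf card_neighbours outflow_def)
  finally show ?thesis by (simp add: algebra_simps)
qed

lemma sum_outflow_eq_sum_inflow:
  assumes "finite V" and "\<forall>x y. E x y \<longrightarrow> E y x"
  shows "(\<Sum>y\<in>V. outflow V E S y) = (\<Sum>y\<in>V. inflow V E S y)"
proof -
  have "(\<Sum>y\<in>V. outflow V E S y) = (\<Sum>z\<in>V. \<Sum>y\<in>{y\<in>V. E y z}. exit_flow V E S y z)"
    unfolding outflow_def neighbours_def
    using sum.swap_restrict[OF assms(1) assms(1), of "exit_flow V E S" E] by simp
  also have "\<dots> = (\<Sum>y\<in>V. inflow V E S y)"
    unfolding inflow_def neighbours_def using assms(2) by (intro sum.cong refl) blast+
  finally show ?thesis .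
qed

lemma S_dist_attained:
  assumes "S_path V E S u v xs"
  obtains ys where "S_path V E S u v ys" and "S_dist V E S u v = Some (length ys - 1)"
proof -
  let ?d = "LEAST n. \<exists>xs. S_path V E S u v xs \<and> length xs = Suc n"
  have "\<exists>n xs. S_path V E S u v xs \<and> length xs = Suc n"
    using assms by (intro exI[of _ "length xs - 1"]) (auto simp: S_path_def gpath_def)
  from LeastI_ex[OF this] obtain ys where "S_path V E S u v ys" "length ys = Suc ?d"
    by blast
  moreover from this have "S_dist V E S u v = Some (length ys - 1)"
    unfolding S_dist_def by auto
  ultimately show ?thesis using that by blast
qed

lemma S_path_in_exit_paths:
  assumes "S_path V E S u v xs" and "u \<notin> S"
  shows "length xs \<ge> 2" and "xs ! 1 \<in> neighbours V E u" and "xs \<in> exit_paths V E S u (xs ! 1)"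
proof -
  have gp: "gpath V E xs" and hd: "hd xs = u" and last: "last xs = v"
    and ends: "card ({hd xs, last xs} \<inter> S) = 1" and avoid: "set (butlast (tl xs)) \<inter> S = {}"
    using assms(1) by (auto simp: S_path_def)
  obtain w ws where xs_eq: "xs = u # w # ws"
    using gp hd ends assms(2) unfolding gpath_def by (cases xs; cases "tl xs") auto
  show "length xs \<ge> 2" using xs_eq by simp
  show "xs ! 1 \<in> neighbours V E u"
    using gp unfolding xs_eq gpath_def neighbours_def by simp
  have "last xs \<in> S"
    using ends assms(2) unfolding xs_eq by (auto simp: Int_insert_left split: if_splits)
  then show "xs \<in> exit_paths V E S u (xs ! 1)"
    using gp avoid unfolding exit_paths_def xs_eq by simp
qed

lemma exp_weight_le_outflow:
  assumes "finite V" and "S \<subseteq> V" and "u \<notin> S"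
  shows "exp_weight V E S u \<le> outflow V E S u"
proof -
  define R where "R = {v\<in>S. \<exists>xs. S_path V E S u v xs}"
  define p where "p v = (SOME ys. S_path V E S u v ys \<and> S_dist V E S u v = Some (length ys - 1))" for v
  have p: "S_path V E S u v (p v) \<and> S_dist V E S u v = Some (length (p v) - 1)" if vR: "v \<in> R" for v
  proof -
    obtain xs where "S_path V E S u v xs" using vR by (auto simp: R_def)
    then have "\<exists>ys. S_path V E S u v ys \<and> S_dist V E S u v = Some (length ys - 1)"
      by (rule S_dist_attained) blast
    then show ?thesis unfolding p_def by (rule someI_ex)
  qed
  have "exp_weight V E S u = (\<Sum>v\<in>R. path_weight (p v))"
    unfolding exp_weight_def
  proof (rule sum.mono_neutral_cong_right)
    show "finite S" using assms(1,2) finite_subset by blast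
    show "R \<subseteq> S" by (auto simp: R_def)
    have "S_dist V E S u v = None" if "v \<in> S - R" for v
      using that by (simp add: R_def S_dist_def)
    then show "\<forall>v\<in>S - R. (case S_dist V E S u v of None \<Rightarrow> 0 | Some d \<Rightarrow> (1/2::real) powi (int d - 1)) = 0"
      by simp
  next
    fix v assume "v \<in> R"
    then have "S_dist V E S u v = Some (length (p v) - 1)" and "length (p v) \<ge> 2"
      using p S_path_in_exit_paths(1)[OF _ assms(3)] by blast+
    then show "(case S_dist V E S u v of None \<Rightarrow> 0 | Some d \<Rightarrow> (1/2::real) powi (int d - 1))
        = path_weight (p v)"
      unfolding path_weight_def by (simp add: power_int_def nat_diff_distrib')
  qed
  also have "\<dots> = (\<Sum>xs\<in>p ` R. path_weight xs)"
  proof -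
    have "inj_on p R"
    proof (rule inj_onI)
      fix v w assume "v \<in> R" "w \<in> R" "p v = p w"
      with p[OF \<open>v \<in> R\<close>] p[OF \<open>w \<in> R\<close>] show "v = w" by (simp add: S_path_def)
    qed
    then show ?thesis by (simp add: sum.reindex)
  qed
  also have "\<dots> \<le> (\<Sum>xs\<in>(\<Union>y\<in>neighbours V E u. exit_paths V E S u y). path_weight xs)"
  proof (rule sum_mono2)
    show "finite (\<Union>y\<in>neighbours V E u. exit_paths V E S u y)"
      using assms(1) by (simp add: finite_neighbours finite_exit_paths)
    show "p ` R \<subseteq> (\<Union>y\<in>neighbours V E u. exit_paths V E S u y)"
    proof
      fix xs assume "xs \<in> p ` R"
      then obtain v where "S_path V E S u v xs" using p by blast
      from S_path_in_exit_paths(2,3)[OF this assms(3)]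
      show "xs \<in> (\<Union>y\<in>neighbours V E u. exit_paths V E S u y)" by (rule UN_I)
    qed
  qed (rule path_weight_nonneg)
  also have "\<dots> = outflow V E S u"
    unfolding outflow_def using assms(1) by (simp add: sum_exit_flow finite_neighbours)
  finally show ?thesis .
qed

lemma discharging_bound:
  fixes c d :: "'a \<Rightarrow> real"
  assumes "finite V" and "S \<subseteq> V" and "(\<Sum>y\<in>V. c y) = 0"
    and "\<forall>y\<in>V - S. 3 - d y \<le> 2 * c y" and "\<forall>y\<in>S. - d y \<le> c y" and "\<forall>y\<in>S. d y \<le> 3"
    and "(\<Sum>y\<in>V. d y) + 2 \<le> 2 * card V"
  shows "real (card V) + 2 \<le> 6 * card S"
proof -
  have split: "(\<Sum>y\<in>V. f y) = (\<Sum>y\<in>V - S. f y) + (\<Sum>y\<in>S. f y)" for f :: "'a \<Rightarrow> real"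
    using sum.subset_diff[OF assms(2,1)] by simp
  have "(\<Sum>y\<in>V - S. 3 - d y) \<le> (\<Sum>y\<in>V - S. 2 * c y)"
    using assms(4) by (intro sum_mono) auto
  moreover have "(\<Sum>y\<in>S. - d y) \<le> (\<Sum>y\<in>S. c y)"
    using assms(5) by (intro sum_mono) auto
  moreover have "(\<Sum>y\<in>S. d y) \<le> (\<Sum>y\<in>S. 3)"
    using assms(6) by (intro sum_mono) auto
  moreover have "real (card (V - S)) = real (card V) - real (card S)"
    using assms(1,2) by (simp add: card_Diff_subset of_nat_diff card_mono finite_subset)
  ultimately show ?thesis
    using assms(3,7) split[of c] split[of d]
    by (simp add: sum_subtractf sum_negf sum_distrib_left[symmetric])
qed

lemma exp_dominating_self:
  assumes "finite V"
  shows "exp_dominating V E V"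
  unfolding exp_dominating_def
proof (intro conjI ballI subset_refl)
  fix u assume "u \<in> V"
  then have "S_path V E V u u [u]" by (simp add: S_path_def gpath_def)
  then have "S_dist V E V u u = Some 0"
    unfolding S_dist_def by (auto intro!: Least_eq_0)
  then have "(case S_dist V E V u u of None \<Rightarrow> 0 | Some d \<Rightarrow> (1/2::real) powi (int d - 1)) = 2"
    by simp
  moreover have "(case S_dist V E V u u of None \<Rightarrow> 0 | Some d \<Rightarrow> (1/2::real) powi (int d - 1))
      \<le> exp_weight V E V u"
    unfolding exp_weight_def using \<open>u \<in> V\<close> assms
    by (intro member_le_sum) (auto split: option.splits)
  ultimately show "1 \<le> exp_weight V E V u" by simp
qed

lemma gamma_e_attained:
  assumes "finite V"
  obtains S where "exp_dominating V E S" and "card S = gamma_e V E"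
proof -
  have "\<exists>k S. exp_dominating V E S \<and> card S = k" using exp_dominating_self[OF assms] by blast
  then have "\<exists>S. exp_dominating V E S \<and> card S = gamma_e V E"
    unfolding gamma_e_def by (rule LeastI_ex)
  then show ?thesis using that by blast
qed

lemma card_le_6_card_exp_dominating:
  assumes "simple_graph V E" and "V \<noteq> {}" and "\<not> has_cycle V E"
    and "\<forall>v\<in>V. degree V E v \<le> 3" and "exp_dominating V E S"
  shows "real (card V) + 2 \<le> 6 * card S"
proof -
  have fin: "finite V" and sym: "\<forall>x y. E x y \<longrightarrow> E y x" and irr: "\<forall>x. \<not> E x x"
    using assms(1) by (auto simp: simple_graph_def)
  have SV: "S \<subseteq> V" using assms(5) by (simp add: exp_dominating_def)
  let ?c = "\<lambda>y. outflow V E S y - inflow V E S y" and ?d = "\<lambda>y. real (degree V E y)"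
  show ?thesis
  proof (rule discharging_bound[of V S ?c ?d])
    show "(\<Sum>y\<in>V. ?c y) = 0"
      using sum_outflow_eq_sum_inflow[OF fin sym] by (simp add: sum_subtractf)
    show "\<forall>y\<in>V - S. 3 - ?d y \<le> 2 * ?c y"
    proof
      fix y assume y: "y \<in> V - S"
      have "1 \<le> exp_weight V E S y" using assms(5) y by (auto simp: exp_dominating_def)
      also have "\<dots> \<le> outflow V E S y" using exp_weight_le_outflow[OF fin SV] y by blast
      finally have "(3 - ?d y) * 1 \<le> (3 - ?d y) * outflow V E S y"
        using assms(4) y by (intro mult_left_mono) auto
      then show "3 - ?d y \<le> 2 * ?c y"
        using inflow_le_outflow[OF fin, of y S E] y by (simp add: algebra_simps)
    qed
    show "\<forall>y\<in>S. - ?d y \<le> ?c y"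
    proof
      fix y assume "y \<in> S"
      then show "- ?d y \<le> ?c y"
        using inflow_le_degree[of y S V E] outflow_nonneg[of V E S y] by simp
    qed
    show "\<forall>y\<in>S. ?d y \<le> 3" using assms(4) SV by auto
    have "(\<Sum>y\<in>V. degree V E y) + 2 \<le> 2 * card V"
      using sum_degree_acyclic[OF fin assms(2) sym irr assms(3)] .
    then have "real ((\<Sum>y\<in>V. degree V E y) + 2) \<le> real (2 * card V)"
      by (simp only: of_nat_le_iff)
    then show "(\<Sum>y\<in>V. ?d y) + 2 \<le> 2 * card V" by simp
  qed (use fin SV in auto)
qed

theorem theorem4:
  fixes V :: "'a set" and E :: "'a \<Rightarrow> 'a \<Rightarrow> bool"
  assumes "tree V E"
    and "\<forall>v\<in>V. degree V E v \<le> 3"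
  shows "real (gamma_e V E) \<ge> (real (card V) + 2) / 6"
proof -
  have sg: "simple_graph V E" and "V \<noteq> {}" and "\<not> has_cycle V E"
    using assms(1) by (auto simp: tree_def connected_graph_def)
  then have "finite V" by (simp add: simple_graph_def)
  then obtain S where S: "exp_dominating V E S" and "card S = gamma_e V E"
    by (rule gamma_e_attained)
  have "real (card V) + 2 \<le> 6 * card S"
    by (rule card_le_6_card_exp_dominating[OF sg \<open>V \<noteq> {}\<close> \<open>\<not> has_cycle V E\<close> assms(2) S])
  with \<open>card S = gamma_e V E\<close> show ?thesis by simp
qed

end
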